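(* Let $(H,\Delta,\Delta')$ be a Hopf brace over a field $k$ with first antipode $S$. Then the coalgebra $(H,\Delta,\varepsilon)$ is a left comodule coalgebra over the Hopf algebra $(H,m,1,\Delta',\epsilon,T)$ via the coaction $$\rho(h)=S(h_1)\,h_{21'}\otimes h_{22'},\qquad h\in H.$$ That is, $\rho$ makes $H$ a left $(H,\Delta')$-comodule, and writing $\rho(h)=h_{(-1)}\otimes h_{(0)}$ one has $h_{(-1)}\otimes h_{(0)1}\otimes h_{(0)2}=h_{1(-1)}h_{2(-1)}\otimes h_{1(0)}\otimes h_{2(0)}$ and $h_{(-1)}\varepsilon(h_{(0)})=\varepsilon(h)1_H$ for all $h\in H$.
   Context: All objects are over a field $k$. A Hopf brace $(H,\Delta,\Delta')$ consists of an algebra $(H,m,1)$ together with two Hopf algebra structures $(H,m,1,\Delta,\varepsilon,S)$ and $(H,m,1,\Delta',\epsilon,T)$ on the same algebra, satisfying for all $h\in H$ $$h_{1'}\otimes h_{2'1}\otimes h_{2'2}=h_{11'}\,S(h_2)\,h_{31'}\otimes h_{12'}\otimes h_{32'}.$$ Sweedler notation: $\Delta(h)=h_1\otimes h_2$, $\Delta'(h)=h_{1'}\otimes h_{2'}$ (summation omitted); $h_{21'}\otimes h_{22'}$ means $\Delta'$ applied to $h_2$. *)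

theory Defs
  imports Main "HOL.Vector_Spaces"
begin

text \<open>
  An element of H (x) H (resp. H (x) H (x) H) is represented by a finite
  list of pairs (resp. triples), i.e. a finite sum of simple tensors.
  Two representatives denote the same tensor iff they agree under all products
  of linear functionals (valid over a field). A coproduct is a function
  assigning to each h a Sweedler representative of Delta(h).
\<close>

definition lin_fun :: "('k::field \<Rightarrow> 'h::ab_group_add \<Rightarrow> 'h) \<Rightarrow> ('h \<Rightarrow> 'k) \<Rightarrow> bool" where
  "lin_fun sc \<phi> \<longleftrightarrow> Vector_Spaces.linear sc (*) \<phi>"

definition teq2 :: "('k::field \<Rightarrow> 'h::ab_group_add \<Rightarrow> 'h) \<Rightarrow> ('h \<times> 'h) list \<Rightarrow> ('h \<times> 'h) list \<Rightarrow> bool" where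
  "teq2 sc xs ys \<longleftrightarrow>
     (\<forall>\<phi> \<psi>. lin_fun sc \<phi> \<longrightarrow> lin_fun sc \<psi> \<longrightarrow>
        (\<Sum>(a,b)\<leftarrow>xs. \<phi> a * \<psi> b) = (\<Sum>(a,b)\<leftarrow>ys. \<phi> a * \<psi> b))"

definition teq3 :: "('k::field \<Rightarrow> 'h::ab_group_add \<Rightarrow> 'h) \<Rightarrow> ('h \<times> 'h \<times> 'h) list \<Rightarrow> ('h \<times> 'h \<times> 'h) list \<Rightarrow> bool" where
  "teq3 sc xs ys \<longleftrightarrow>
     (\<forall>\<phi> \<psi> \<chi>. lin_fun sc \<phi> \<longrightarrow> lin_fun sc \<psi> \<longrightarrow> lin_fun sc \<chi> \<longrightarrow>
        (\<Sum>(a,b,c)\<leftarrow>xs. \<phi> a * \<psi> b * \<chi> c) = (\<Sum>(a,b,c)\<leftarrow>ys. \<phi> a * \<psi> b * \<chi> c))"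

definition k_algebra :: "('k::field \<Rightarrow> 'h::ring_1 \<Rightarrow> 'h) \<Rightarrow> bool" where
  "k_algebra sc \<longleftrightarrow> vector_space sc \<and>
     (\<forall>c a b. sc c (a * b) = sc c a * b \<and> sc c (a * b) = a * sc c b)"

definition cop3 :: "('h \<Rightarrow> ('h \<times> 'h) list) \<Rightarrow> 'h \<Rightarrow> ('h \<times> 'h \<times> 'h) list" where
  "cop3 \<Delta> h = [(x1, x2, y). (x, y) \<leftarrow> \<Delta> h, (x1, x2) \<leftarrow> \<Delta> x]"

definition hopf_alg :: "('k::field \<Rightarrow> 'h::ring_1 \<Rightarrow> 'h) \<Rightarrow> ('h \<Rightarrow> ('h \<times> 'h) list)
    \<Rightarrow> ('h \<Rightarrow> 'k) \<Rightarrow> ('h \<Rightarrow> 'h) \<Rightarrow> bool" where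
  "hopf_alg sc \<Delta> \<epsilon> S \<longleftrightarrow>
     \<comment> \<open>linearity of \<Delta>, \<epsilon>, S\<close>
     (\<forall>a b. teq2 sc (\<Delta> (a + b)) (\<Delta> a @ \<Delta> b)) \<and>
     (\<forall>c a. teq2 sc (\<Delta> (sc c a)) (map (\<lambda>(x, y). (sc c x, y)) (\<Delta> a))) \<and>
     lin_fun sc \<epsilon> \<and>
     Vector_Spaces.linear sc sc S \<and>
     \<comment> \<open>coassociativity and counit\<close>
     (\<forall>h. teq3 sc (cop3 \<Delta> h) [(x, y1, y2). (x, y) \<leftarrow> \<Delta> h, (y1, y2) \<leftarrow> \<Delta> y]) \<and>
     (\<forall>h. (\<Sum>(x, y)\<leftarrow>\<Delta> h. sc (\<epsilon> x) y) = h) \<and>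
     (\<forall>h. (\<Sum>(x, y)\<leftarrow>\<Delta> h. sc (\<epsilon> y) x) = h) \<and>
     \<comment> \<open>\<Delta> and \<epsilon> are algebra maps\<close>
     (\<forall>a b. teq2 sc (\<Delta> (a * b)) [(x * u, y * v). (x, y) \<leftarrow> \<Delta> a, (u, v) \<leftarrow> \<Delta> b]) \<and>
     teq2 sc (\<Delta> 1) [(1, 1)] \<and>
     (\<forall>a b. \<epsilon> (a * b) = \<epsilon> a * \<epsilon> b) \<and> \<epsilon> 1 = 1 \<and>
     \<comment> \<open>antipode\<close>
     (\<forall>h. (\<Sum>(x, y)\<leftarrow>\<Delta> h. S x * y) = sc (\<epsilon> h) 1) \<and>
     (\<forall>h. (\<Sum>(x, y)\<leftarrow>\<Delta> h. x * S y) = sc (\<epsilon> h) 1)"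

text \<open>Hopf brace (H, \<Delta>, \<Delta>'):
  h_{1'} (x) h_{2'1} (x) h_{2'2} = h_{11'} S(h_2) h_{31'} (x) h_{12'} (x) h_{32'}.\<close>
definition hopf_brace :: "('k::field \<Rightarrow> 'h::ring_1 \<Rightarrow> 'h)
    \<Rightarrow> ('h \<Rightarrow> ('h \<times> 'h) list) \<Rightarrow> ('h \<Rightarrow> 'k) \<Rightarrow> ('h \<Rightarrow> 'h)
    \<Rightarrow> ('h \<Rightarrow> ('h \<times> 'h) list) \<Rightarrow> ('h \<Rightarrow> 'k) \<Rightarrow> ('h \<Rightarrow> 'h) \<Rightarrow> bool" where
  "hopf_brace sc \<Delta> \<epsilon> S \<Delta>' \<epsilon>' T \<longleftrightarrow>
     k_algebra sc \<and> hopf_alg sc \<Delta> \<epsilon> S \<and> hopf_alg sc \<Delta>' \<epsilon>' T \<and>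
     (\<forall>h. teq3 sc
        [(a, b1, b2). (a, b) \<leftarrow> \<Delta>' h, (b1, b2) \<leftarrow> \<Delta> b]
        [(p * S y * r, p', r'). (x, y, z) \<leftarrow> cop3 \<Delta> h, (p, p') \<leftarrow> \<Delta>' x, (r, r') \<leftarrow> \<Delta>' z])"

definition brace_coaction :: "('h::ring_1 \<Rightarrow> ('h \<times> 'h) list) \<Rightarrow> ('h \<Rightarrow> 'h)
    \<Rightarrow> ('h \<Rightarrow> ('h \<times> 'h) list) \<Rightarrow> 'h \<Rightarrow> ('h \<times> 'h) list" where
  "brace_coaction \<Delta> S \<Delta>' h = [(S x * u, v). (x, y) \<leftarrow> \<Delta> h, (u, v) \<leftarrow> \<Delta>' y]"

end

theory Submission
  imports Defs
begin

text \<open>Over a field, elements of tensor powers of H are separated by products of linear functionals,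
  so every identity to be shown becomes an identity between scalar sums over Sweedler
  representatives, to be rewritten with the coassociativity, counit and antipode laws. Two
  consequences of the brace identity drive the argument: \<open>\<epsilon>' = \<epsilon>\<close> (from \<open>\<epsilon>' \<circ> S = \<epsilon>\<close>), and
  \<open>\<Delta>'(S h) = S(h\<^sub>1) h\<^sub>2\<^sub>1\<^sub>' S(h\<^sub>3) \<otimes> S(h\<^sub>2\<^sub>2\<^sub>')\<close>. Expanding \<open>\<Delta>'(S(h\<^sub>1) h\<^sub>2\<^sub>1\<^sub>')\<close>
  multiplicatively and inserting this formula yields coassociativity of \<rho>, while the brace
  identity applied to \<open>h\<^sub>2\<close> in \<open>S(h\<^sub>1) h\<^sub>2\<^sub>1\<^sub>' \<otimes> \<Delta>(h\<^sub>2\<^sub>2\<^sub>')\<close> yields the compatibility with \<Delta>.\<close>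

lemma sum_list_concat_map [simp]:
  "sum_list (map f (concat (map g xs))) = (\<Sum>x\<leftarrow>xs. sum_list (map f (g x)))"
  by (induction xs) auto

lemma sum_list_sum_swap:
  "(\<Sum>x\<leftarrow>xs. \<Sum>e\<in>E. f x e) = (\<Sum>e\<in>E. \<Sum>x\<leftarrow>xs. f x e)"
  by (induction xs) (auto simp: sum.distrib)

lemma sum_list_pair_cong:
  "(\<And>a b. (a, b) \<in> set xs \<Longrightarrow> f a b = g a b) \<Longrightarrow> (\<Sum>(a, b)\<leftarrow>xs. f a b) = (\<Sum>(a, b)\<leftarrow>xs. g a b)"
  by (intro arg_cong[where f = sum_list] map_cong) auto

lemma sum_list_pair_swap:
  "(\<Sum>(a, b)\<leftarrow>xs. \<Sum>(c, d)\<leftarrow>ys. f a b c d :: 'x::comm_monoid_add) = (\<Sum>(c, d)\<leftarrow>ys. \<Sum>(a, b)\<leftarrow>xs. f a b c d)"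
  by (induction xs) (auto simp: split_def sum_list_addf)

lemma vector_space_field: "vector_space ((*) :: 'k::field \<Rightarrow> 'k \<Rightarrow> 'k)"
  by unfold_locales (simp_all add: algebra_simps)

context vector_space
begin

lemma lin_fun_iff: "lin_fun scale f \<longleftrightarrow> (\<forall>x y. f (x + y) = f x + f y) \<and> (\<forall>c x. f (scale c x) = c * f x)"
  unfolding lin_fun_def linear_iff using vector_space_axioms vector_space_field by blast

lemma lin_fun_add: "lin_fun scale f \<Longrightarrow> f (x + y) = f x + f y"
  by (simp add: lin_fun_iff)

lemma lin_fun_scale: "lin_fun scale f \<Longrightarrow> f (scale c x) = c * f x"
  by (simp add: lin_fun_iff)

lemma lin_fun_zero: "lin_fun scale f \<Longrightarrow> f 0 = 0"
  using lin_fun_scale[of f 0 0] by simp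

lemma lin_fun_sum: "lin_fun scale f \<Longrightarrow> f (\<Sum>e\<in>E. scale (c e) e) = (\<Sum>e\<in>E. c e * f e)"
  by (induction E rule: infinite_finite_induct) (auto simp: lin_fun_zero lin_fun_add lin_fun_scale)

lemma lin_fun_sum_list: "lin_fun scale f \<Longrightarrow> f (\<Sum>x\<leftarrow>xs. g x) = (\<Sum>x\<leftarrow>xs. f (g x))"
  by (induction xs) (auto simp: lin_fun_zero lin_fun_add)

definition coord :: "'b \<Rightarrow> 'b \<Rightarrow> 'a" where
  "coord v = representation (extend_basis {}) v"

lemma
  shows independent_extend_basis_empty: "independent (extend_basis {})"
    and span_extend_basis_empty: "span (extend_basis {}) = UNIV"
  using independent_extend_basis[OF independent_empty] span_extend_basis[OF independent_empty]
  by auto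

lemma lin_fun_coord: "lin_fun scale (\<lambda>v. coord v b)"
  unfolding lin_fun_def coord_def
  using linear_representation[OF independent_extend_basis_empty span_extend_basis_empty] .

lemma finite_coord_support: "finite {b. coord v b \<noteq> 0}"
  unfolding coord_def by (rule finite_representation)

lemma coord_expansion: "v = (\<Sum>b | coord v b \<noteq> 0. scale (coord v b) b)"
  unfolding coord_def
  using sum_nonzero_representation_eq[OF independent_extend_basis_empty] span_extend_basis_empty
  by auto

lemma lin_fun_coord_expansion:
  assumes "lin_fun scale f" "finite E" "{b. coord v b \<noteq> 0} \<subseteq> E"
  shows "f v = (\<Sum>e\<in>E. coord v e * f e)"
proof -
  have "v = (\<Sum>e\<in>E. scale (coord v e) e)"
    using assms(2,3) by (subst coord_expansion) (intro sum.mono_neutral_left, auto)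
  then show ?thesis
    using lin_fun_sum[OF assms(1)] by metis
qed

lemma lin_funs_separate:
  assumes "\<And>\<phi>. lin_fun scale \<phi> \<Longrightarrow> \<phi> u = \<phi> v"
  shows "u = v"
  using coord_expansion[of u] coord_expansion[of v] assms[OF lin_fun_coord] by simp

text \<open>\<open>teq2\<close> only tests products \<open>\<phi> a * \<psi> b\<close>; expanding the first argument in coordinates
  extends it to arbitrary bilinear forms, and likewise for \<open>teq3\<close>.\<close>

lemma teq2_bilinear:
  assumes "teq2 scale xs ys"
    and "\<And>b. lin_fun scale (\<lambda>a. F a b)" "\<And>a. lin_fun scale (\<lambda>b. F a b)"
  shows "(\<Sum>(a, b)\<leftarrow>xs. F a b) = (\<Sum>(a, b)\<leftarrow>ys. F a b)"
proof -
  define E where "E = (\<Union>a\<in>fst ` set (xs @ ys). {e. coord a e \<noteq> 0})"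
  have "finite E"
    unfolding E_def using finite_coord_support by auto
  have support: "{e. coord a e \<noteq> 0} \<subseteq> E" if "(a, b) \<in> set (xs @ ys)" for a b
    using that unfolding E_def by force
  have expand: "(\<Sum>(a, b)\<leftarrow>zs. F a b) = (\<Sum>e\<in>E. \<Sum>(a, b)\<leftarrow>zs. coord a e * F e b)"
    if "set zs \<subseteq> set (xs @ ys)" for zs
  proof -
    have "F a b = (\<Sum>e\<in>E. coord a e * F e b)" if "(a, b) \<in> set zs" for a b
      using \<open>set zs \<subseteq> _\<close> that
      by (intro lin_fun_coord_expansion[OF assms(2) \<open>finite E\<close> support]) auto
    then show ?thesis
      unfolding sum_list_sum_swap[symmetric] by (intro arg_cong[where f = sum_list] map_cong) auto
  qed
  show ?thesis
    unfolding expand[of xs, simplified] expand[of ys, simplified]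
    using assms(1)[unfolded teq2_def, rule_format, OF lin_fun_coord assms(3)] by simp
qed

lemma teq3_trilinear:
  assumes "teq3 scale xs ys"
    and "\<And>b c. lin_fun scale (\<lambda>a. F a b c)" "\<And>a c. lin_fun scale (\<lambda>b. F a b c)"
    and "\<And>a b. lin_fun scale (\<lambda>c. F a b c)"
  shows "(\<Sum>(a, b, c)\<leftarrow>xs. F a b c) = (\<Sum>(a, b, c)\<leftarrow>ys. F a b c)"
proof -
  define E1 where "E1 = (\<Union>a\<in>fst ` set (xs @ ys). {e. coord a e \<noteq> 0})"
  define E2 where "E2 = (\<Union>b\<in>(fst \<circ> snd) ` set (xs @ ys). {e. coord b e \<noteq> 0})"
  have "finite E1" "finite E2"
    unfolding E1_def E2_def using finite_coord_support by auto
  have support: "{e. coord a e \<noteq> 0} \<subseteq> E1" "{e. coord b e \<noteq> 0} \<subseteq> E2"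
    if "(a, b, c) \<in> set (xs @ ys)" for a b c
    using that unfolding E1_def E2_def by force+
  have expand: "(\<Sum>(a, b, c)\<leftarrow>zs. F a b c) =
      (\<Sum>e1\<in>E1. \<Sum>e2\<in>E2. \<Sum>(a, b, c)\<leftarrow>zs. coord a e1 * coord b e2 * F e1 e2 c)"
    if "set zs \<subseteq> set (xs @ ys)" for zs
  proof -
    have "F a b c = (\<Sum>e1\<in>E1. \<Sum>e2\<in>E2. coord a e1 * coord b e2 * F e1 e2 c)"
      if "(a, b, c) \<in> set zs" for a b c
    proof -
      have abc: "(a, b, c) \<in> set (xs @ ys)"
        using that \<open>set zs \<subseteq> _\<close> by auto
      have "F a b c = (\<Sum>e1\<in>E1. coord a e1 * F e1 b c)"
        by (rule lin_fun_coord_expansion[OF assms(2) \<open>finite E1\<close> support(1)[OF abc]])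
      also have "\<dots> = (\<Sum>e1\<in>E1. coord a e1 * (\<Sum>e2\<in>E2. coord b e2 * F e1 e2 c))"
        using lin_fun_coord_expansion[OF assms(3) \<open>finite E2\<close> support(2)[OF abc]] by simp
      finally show ?thesis
        by (simp add: sum_distrib_left mult.assoc)
    qed
    then show ?thesis
      unfolding sum_list_sum_swap[symmetric] by (intro arg_cong[where f = sum_list] map_cong) auto
  qed
  show ?thesis
    unfolding expand[of xs, simplified] expand[of ys, simplified]
    using assms(1)[unfolded teq3_def, rule_format, OF lin_fun_coord lin_fun_coord assms(4)] by simp
qed

end

locale k_alg =
  fixes sc :: "'k::field \<Rightarrow> 'h::ring_1 \<Rightarrow> 'h"
  assumes k_algebra: "k_algebra sc"
begin

sublocale vector_space sc
  using k_algebra unfolding k_algebra_def by blast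

abbreviation lin :: "('h \<Rightarrow> 'k) \<Rightarrow> bool" where
  "lin \<equiv> lin_fun sc"

abbreviation lin_endo :: "('h \<Rightarrow> 'h) \<Rightarrow> bool" where
  "lin_endo \<equiv> Vector_Spaces.linear sc sc"

lemma scale_mult_left: "sc c a * b = sc c (a * b)"
  using k_algebra unfolding k_algebra_def by metis

lemma scale_mult_right: "a * sc c b = sc c (a * b)"
  using k_algebra unfolding k_algebra_def by metis

lemma lin_endo_iff: "lin_endo g \<longleftrightarrow> (\<forall>x y. g (x + y) = g x + g y) \<and> (\<forall>c x. g (sc c x) = sc c (g x))"
  using linear_iff vector_space_axioms by blast

lemma lin_endo_ident [simp]: "lin_endo (\<lambda>x. x)"
  by (simp add: lin_endo_iff)

lemma lin_endo_mult_right [simp]: "lin_endo g \<Longrightarrow> lin_endo (\<lambda>x. g x * c)"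
  by (simp add: lin_endo_iff distrib_right scale_mult_left)

lemma lin_endo_mult_left [simp]: "lin_endo g \<Longrightarrow> lin_endo (\<lambda>x. c * g x)"
  by (simp add: lin_endo_iff distrib_left scale_mult_right)

lemma lin_fun_mult_right [simp]: "lin f \<Longrightarrow> lin (\<lambda>x. f x * c)"
  by (simp add: lin_fun_iff algebra_simps)

lemma lin_fun_mult_left [simp]: "lin f \<Longrightarrow> lin (\<lambda>x. c * f x)"
  by (simp add: lin_fun_iff algebra_simps)

lemma lin_fun_sum_list_pair [simp]:
  "(\<And>u v. lin (\<lambda>x. F u v x)) \<Longrightarrow> lin (\<lambda>x. \<Sum>(u, v)\<leftarrow>xs. F u v x)"
  by (induction xs) (auto simp: lin_fun_iff algebra_simps sum_list_const_mult)

lemma lin_fun_comp: "lin \<phi> \<Longrightarrow> lin_endo g \<Longrightarrow> lin (\<lambda>x. \<phi> (g x))"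
  by (simp add: lin_fun_iff lin_endo_iff)

end

locale hopf = k_alg sc for sc :: "'k::field \<Rightarrow> 'h::ring_1 \<Rightarrow> 'h" +
  fixes D :: "'h \<Rightarrow> ('h \<times> 'h) list" and e :: "'h \<Rightarrow> 'k" and s :: "'h \<Rightarrow> 'h"
  assumes hopf_alg: "hopf_alg sc D e s"
begin

lemma counit_lin [simp]: "lin e"
  using hopf_alg unfolding hopf_alg_def by blast

lemma counit_mult: "e (a * b) = e a * e b"
  using hopf_alg unfolding hopf_alg_def by blast

lemma counit_one: "e 1 = 1"
  using hopf_alg unfolding hopf_alg_def by blast

lemma antipode_lin [simp]: "lin_endo s"
  using hopf_alg unfolding hopf_alg_def by blast

lemma lin_fun_counit_comp [simp]: "lin_endo g \<Longrightarrow> lin (\<lambda>x. e (g x))"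
  by (rule lin_fun_comp[OF counit_lin])

context
  fixes G :: "'h \<Rightarrow> 'h \<Rightarrow> 'k"
  assumes bilinear: "\<And>v. lin (\<lambda>u. G u v)" "\<And>u. lin (\<lambda>v. G u v)"
begin

lemma comult_add: "(\<Sum>(u, v)\<leftarrow>D (x + y). G u v) = (\<Sum>(u, v)\<leftarrow>D x. G u v) + (\<Sum>(u, v)\<leftarrow>D y. G u v)"
proof -
  have "teq2 sc (D (x + y)) (D x @ D y)"
    using hopf_alg unfolding hopf_alg_def by blast
  from teq2_bilinear[OF this bilinear] show ?thesis
    by simp
qed

lemma comult_scale: "(\<Sum>(u, v)\<leftarrow>D (sc c x). G u v) = c * (\<Sum>(u, v)\<leftarrow>D x. G u v)"
proof -
  have "teq2 sc (D (sc c x)) (map (\<lambda>(u, v). (sc c u, v)) (D x))"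
    using hopf_alg unfolding hopf_alg_def by blast
  from teq2_bilinear[OF this bilinear] show ?thesis
    using lin_fun_scale[OF bilinear(1)] by (simp add: o_def split_def sum_list_const_mult)
qed

lemma lin_fun_comult_sum [simp]: "lin_endo g \<Longrightarrow> lin (\<lambda>x. \<Sum>(u, v)\<leftarrow>D (g x). G u v)"
  by (simp add: lin_fun_iff lin_endo_iff comult_add comult_scale)

lemma comult_mult: "(\<Sum>(u, v)\<leftarrow>D (a * b). G u v) = (\<Sum>(x, y)\<leftarrow>D a. \<Sum>(u, v)\<leftarrow>D b. G (x * u) (y * v))"
proof -
  have "teq2 sc (D (a * b)) [(x * u, y * v). (x, y) \<leftarrow> D a, (u, v) \<leftarrow> D b]"
    using hopf_alg unfolding hopf_alg_def by blast
  from teq2_bilinear[OF this bilinear] show ?thesis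
    by (simp add: o_def prod.case_distrib)
qed

lemma comult_one: "(\<Sum>(u, v)\<leftarrow>D 1. G u v) = G 1 1"
proof -
  have "teq2 sc (D 1) [(1, 1)]"
    using hopf_alg unfolding hopf_alg_def by blast
  from teq2_bilinear[OF this bilinear] show ?thesis
    by simp
qed

end

lemma coassoc:
  assumes "\<And>b c. lin (\<lambda>a. F a b c)" "\<And>a c. lin (\<lambda>b. F a b c)" "\<And>a b. lin (\<lambda>c. F a b c)"
  shows "(\<Sum>(x, y)\<leftarrow>D h. \<Sum>(x1, x2)\<leftarrow>D x. F x1 x2 y) = (\<Sum>(x, y)\<leftarrow>D h. \<Sum>(y1, y2)\<leftarrow>D y. F x y1 y2)"
proof -
  have "teq3 sc (cop3 D h) [(x, y1, y2). (x, y) \<leftarrow> D h, (y1, y2) \<leftarrow> D y]"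
    using hopf_alg unfolding hopf_alg_def by blast
  from teq3_trilinear[OF this assms] show ?thesis
    by (simp add: cop3_def o_def prod.case_distrib)
qed

lemma counit_left:
  assumes "lin f"
  shows "(\<Sum>(a, b)\<leftarrow>D h. e a * f b) = f h"
proof -
  have "(\<Sum>(a, b)\<leftarrow>D h. sc (e a) b) = h"
    using hopf_alg unfolding hopf_alg_def by blast
  moreover have "f (\<Sum>(a, b)\<leftarrow>D h. sc (e a) b) = (\<Sum>(a, b)\<leftarrow>D h. e a * f b)"
    by (simp add: lin_fun_sum_list[OF assms] lin_fun_scale[OF assms] split_def)
  ultimately show ?thesis
    by simp
qed

lemma counit_right:
  assumes "lin f"
  shows "(\<Sum>(a, b)\<leftarrow>D h. f a * e b) = f h"
proof -
  have "(\<Sum>(a, b)\<leftarrow>D h. sc (e b) a) = h"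
    using hopf_alg unfolding hopf_alg_def by blast
  moreover have "f (\<Sum>(a, b)\<leftarrow>D h. sc (e b) a) = (\<Sum>(a, b)\<leftarrow>D h. f a * e b)"
    by (simp add: lin_fun_sum_list[OF assms] lin_fun_scale[OF assms] split_def mult.commute)
  ultimately show ?thesis
    by simp
qed

lemma antipode_left:
  assumes "lin f"
  shows "(\<Sum>(a, b)\<leftarrow>D h. f (s a * b)) = e h * f 1"
proof -
  have "(\<Sum>(a, b)\<leftarrow>D h. s a * b) = sc (e h) 1"
    using hopf_alg unfolding hopf_alg_def by blast
  then have "f (sc (e h) 1) = f (\<Sum>(a, b)\<leftarrow>D h. s a * b)"
    by simp
  then show ?thesis
    by (simp add: lin_fun_sum_list[OF assms] lin_fun_scale[OF assms] split_def)
qed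

lemma antipode_right:
  assumes "lin f"
  shows "(\<Sum>(a, b)\<leftarrow>D h. f (a * s b)) = e h * f 1"
proof -
  have "(\<Sum>(a, b)\<leftarrow>D h. a * s b) = sc (e h) 1"
    using hopf_alg unfolding hopf_alg_def by blast
  then have "f (sc (e h) 1) = f (\<Sum>(a, b)\<leftarrow>D h. a * s b)"
    by simp
  then show ?thesis
    by (simp add: lin_fun_sum_list[OF assms] lin_fun_scale[OF assms] split_def)
qed

context
  fixes K :: "'h \<Rightarrow> 'h \<Rightarrow> 'h \<Rightarrow> 'h \<Rightarrow> 'k"
  assumes multilinear: "\<And>b c d. lin (\<lambda>a. K a b c d)" "\<And>a c d. lin (\<lambda>b. K a b c d)"
    "\<And>a b d. lin (\<lambda>c. K a b c d)" "\<And>a b c. lin (\<lambda>d. K a b c d)"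
begin

lemma coassoc4_inner:
  "(\<Sum>(x, y)\<leftarrow>D h. \<Sum>(z, w)\<leftarrow>D y. \<Sum>(z1, z2)\<leftarrow>D z. K x z1 z2 w) =
   (\<Sum>(x, y)\<leftarrow>D h. \<Sum>(y1, y2)\<leftarrow>D y. \<Sum>(z1, z2)\<leftarrow>D y2. K x y1 z1 z2)"
  by (intro sum_list_pair_cong coassoc) (simp_all add: multilinear)

lemma coassoc4_balanced:
  "(\<Sum>(x, y)\<leftarrow>D h. \<Sum>(x1, x2)\<leftarrow>D x. \<Sum>(y1, y2)\<leftarrow>D y. K x1 x2 y1 y2) =
   (\<Sum>(x, y)\<leftarrow>D h. \<Sum>(y1, y2)\<leftarrow>D y. \<Sum>(z1, z2)\<leftarrow>D y2. K x y1 z1 z2)"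
  by (rule coassoc) (simp_all add: multilinear)

lemma coassoc4_left:
  "(\<Sum>(x, y)\<leftarrow>D h. \<Sum>(a, b)\<leftarrow>D x. \<Sum>(a1, a2)\<leftarrow>D a. K a1 a2 b y) =
   (\<Sum>(x, y)\<leftarrow>D h. \<Sum>(y1, y2)\<leftarrow>D y. \<Sum>(z1, z2)\<leftarrow>D y2. K x y1 z1 z2)"
proof -
  have "(\<Sum>(x, y)\<leftarrow>D h. \<Sum>(a, b)\<leftarrow>D x. \<Sum>(a1, a2)\<leftarrow>D a. K a1 a2 b y) =
      (\<Sum>(x, y)\<leftarrow>D h. \<Sum>(y1, y2)\<leftarrow>D y. \<Sum>(a1, a2)\<leftarrow>D x. K a1 a2 y1 y2)"
    by (rule coassoc) (simp_all add: multilinear)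
  also have "\<dots> = (\<Sum>(x, y)\<leftarrow>D h. \<Sum>(x1, x2)\<leftarrow>D x. \<Sum>(y1, y2)\<leftarrow>D y. K x1 x2 y1 y2)"
    by (intro sum_list_pair_cong sum_list_pair_swap)
  also have "\<dots> = (\<Sum>(x, y)\<leftarrow>D h. \<Sum>(y1, y2)\<leftarrow>D y. \<Sum>(z1, z2)\<leftarrow>D y2. K x y1 z1 z2)"
    by (rule coassoc4_balanced)
  finally show ?thesis .
qed

end

end

locale brace =
  fixes sc :: "'k::field \<Rightarrow> 'h::ring_1 \<Rightarrow> 'h"
    and \<Delta> \<Delta>' :: "'h \<Rightarrow> ('h \<times> 'h) list"
    and \<epsilon> \<epsilon>' :: "'h \<Rightarrow> 'k"
    and S T :: "'h \<Rightarrow> 'h"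
  assumes hopf_brace: "hopf_brace sc \<Delta> \<epsilon> S \<Delta>' \<epsilon>' T"
begin

sublocale k_alg sc
  using hopf_brace unfolding hopf_brace_def by unfold_locales blast

sublocale D1: hopf sc \<Delta> \<epsilon> S
  using hopf_brace unfolding hopf_brace_def by unfold_locales blast

sublocale D2: hopf sc \<Delta>' \<epsilon>' T
  using hopf_brace unfolding hopf_brace_def by unfold_locales blast

lemma brace_identity:
  assumes "\<And>b c. lin (\<lambda>a. F a b c)" "\<And>a c. lin (\<lambda>b. F a b c)" "\<And>a b. lin (\<lambda>c. F a b c)"
  shows "(\<Sum>(a, b)\<leftarrow>\<Delta>' h. \<Sum>(b1, b2)\<leftarrow>\<Delta> b. F a b1 b2) =
    (\<Sum>(x, y)\<leftarrow>\<Delta> h. \<Sum>(x1, x2)\<leftarrow>\<Delta> x. \<Sum>(p, p')\<leftarrow>\<Delta>' x1. \<Sum>(r, r')\<leftarrow>\<Delta>' y. F (p * S x2 * r) p' r')"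
proof -
  have "teq3 sc [(a, b1, b2). (a, b) \<leftarrow> \<Delta>' h, (b1, b2) \<leftarrow> \<Delta> b]
      [(p * S y * r, p', r'). (x, y, z) \<leftarrow> cop3 \<Delta> h, (p, p') \<leftarrow> \<Delta>' x, (r, r') \<leftarrow> \<Delta>' z]"
    using hopf_brace unfolding hopf_brace_def by blast
  from teq3_trilinear[OF this assms] show ?thesis
    by (simp add: cop3_def o_def prod.case_distrib)
qed

lemma counit'_antipode: "\<epsilon>' (S h) = \<epsilon> h"
proof -
  have "\<epsilon> h = (\<Sum>(a, b)\<leftarrow>\<Delta>' h. \<epsilon>' a * \<epsilon> b)"
    using D2.counit_left[of \<epsilon> h] by simp
  also have "\<dots> = (\<Sum>(a, b)\<leftarrow>\<Delta>' h. \<Sum>(b1, b2)\<leftarrow>\<Delta> b. \<epsilon>' a * \<epsilon> b1 * \<epsilon> b2)"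
    apply (intro sum_list_pair_cong)
    subgoal for a b
      using D1.counit_left[of "\<lambda>x. \<epsilon>' a * \<epsilon> x" b] by (simp add: mult_ac)
    done
  also have "\<dots> = (\<Sum>(x, y)\<leftarrow>\<Delta> h. \<Sum>(x1, x2)\<leftarrow>\<Delta> x. \<Sum>(p, p')\<leftarrow>\<Delta>' x1. \<Sum>(r, r')\<leftarrow>\<Delta>' y.
      \<epsilon>' (p * S x2 * r) * \<epsilon> p' * \<epsilon> r')"
    by (rule brace_identity) simp_all
  also have "\<dots> = (\<Sum>(x, y)\<leftarrow>\<Delta> h. \<Sum>(x1, x2)\<leftarrow>\<Delta> x. \<Sum>(p, p')\<leftarrow>\<Delta>' x1. \<epsilon>' p * \<epsilon> p' * \<epsilon>' (S x2) * \<epsilon> y)"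
    apply (intro sum_list_pair_cong)
    subgoal for x y x1 x2 p p'
      using D2.counit_left[of "\<lambda>r. \<epsilon>' p * \<epsilon> p' * \<epsilon>' (S x2) * \<epsilon> r" y]
      by (simp add: mult_ac D2.counit_mult)
    done
  also have "\<dots> = (\<Sum>(x, y)\<leftarrow>\<Delta> h. \<Sum>(x1, x2)\<leftarrow>\<Delta> x. \<epsilon> x1 * \<epsilon>' (S x2) * \<epsilon> y)"
    apply (intro sum_list_pair_cong)
    subgoal for x y x1 x2
      using D2.counit_left[of "\<lambda>p. \<epsilon> p * \<epsilon>' (S x2) * \<epsilon> y" x1] by (simp add: mult_ac)
    done
  also have "\<dots> = (\<Sum>(x, y)\<leftarrow>\<Delta> h. \<epsilon>' (S x) * \<epsilon> y)"
    apply (intro sum_list_pair_cong)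
    subgoal for x y
      using D1.counit_left[of "\<lambda>p. \<epsilon>' (S p) * \<epsilon> y" x] by (simp add: mult_ac)
    done
  also have "\<dots> = \<epsilon>' (S h)"
    using D1.counit_right[of "\<lambda>p. \<epsilon>' (S p)" h] by simp
  finally show ?thesis
    by simp
qed

lemma counit'_eq_counit: "\<epsilon>' = \<epsilon>"
proof
  fix h
  have "\<epsilon>' h = (\<Sum>(a, b)\<leftarrow>\<Delta> h. \<epsilon> a * \<epsilon>' b)"
    using D1.counit_left[of \<epsilon>' h] by simp
  also have "\<dots> = (\<Sum>(a, b)\<leftarrow>\<Delta> h. \<epsilon>' (S a * b))"
    by (simp add: counit'_antipode D2.counit_mult)
  also have "\<dots> = \<epsilon> h"
    using D1.antipode_left[of \<epsilon>' h] by (simp add: D2.counit_one)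
  finally show "\<epsilon>' h = \<epsilon> h" .
qed

lemma comult'_conv_right_inverse:
  assumes G: "\<And>v. lin (\<lambda>u. G u v)" "\<And>u. lin (\<lambda>v. G u v)"
  shows "(\<Sum>(x1, x2)\<leftarrow>\<Delta> x. \<Sum>(p, q)\<leftarrow>\<Delta>' x1. \<Sum>(a, b)\<leftarrow>\<Delta> x2. \<Sum>(a1, a2)\<leftarrow>\<Delta> a. \<Sum>(m, n)\<leftarrow>\<Delta>' a2.
      G (p * S a1 * m * S b) (q * S n)) = \<epsilon> x * G 1 1"
proof -
  have [simp]: "lin_endo g \<Longrightarrow> lin (\<lambda>u. G (g u) c)" "lin_endo g \<Longrightarrow> lin (\<lambda>u. G c (g u))" for g c
    using lin_fun_comp G by blast+
  have "(\<Sum>(x1, x2)\<leftarrow>\<Delta> x. \<Sum>(p, q)\<leftarrow>\<Delta>' x1. \<Sum>(a, b)\<leftarrow>\<Delta> x2. \<Sum>(a1, a2)\<leftarrow>\<Delta> a. \<Sum>(m, n)\<leftarrow>\<Delta>' a2.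
      G (p * S a1 * m * S b) (q * S n)) =
    (\<Sum>(x1, x2)\<leftarrow>\<Delta> x. \<Sum>(a, b)\<leftarrow>\<Delta> x2. \<Sum>(a1, a2)\<leftarrow>\<Delta> a. \<Sum>(p, q)\<leftarrow>\<Delta>' x1. \<Sum>(m, n)\<leftarrow>\<Delta>' a2.
      G (p * S a1 * m * S b) (q * S n))"
    by (rule sum_list_pair_cong, rule trans[OF sum_list_pair_swap], rule sum_list_pair_cong, rule sum_list_pair_swap)
  also have "\<dots> = (\<Sum>(x, y)\<leftarrow>\<Delta> x. \<Sum>(y1, y2)\<leftarrow>\<Delta> y. \<Sum>(z1, z2)\<leftarrow>\<Delta> y2.
      \<Sum>(p, q)\<leftarrow>\<Delta>' x. \<Sum>(m, n)\<leftarrow>\<Delta>' z1. G (p * S y1 * m * S z2) (q * S n))"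
    by (rule D1.coassoc4_inner) simp_all
  also have "\<dots> = (\<Sum>(X, b)\<leftarrow>\<Delta> x. \<Sum>(Y, a2)\<leftarrow>\<Delta> X. \<Sum>(x1, a1)\<leftarrow>\<Delta> Y. \<Sum>(p, q)\<leftarrow>\<Delta>' x1. \<Sum>(m, n)\<leftarrow>\<Delta>' a2.
      G (p * S a1 * m * S b) (q * S n))"
    by (rule D1.coassoc4_left[symmetric]) simp_all
  also have "\<dots> = (\<Sum>(X, b)\<leftarrow>\<Delta> x. \<Sum>(u, v)\<leftarrow>\<Delta>' X. \<Sum>(v1, v2)\<leftarrow>\<Delta> v. G (u * S b) (v1 * S v2))"
    apply (intro sum_list_pair_cong)
    subgoal for X b
      using brace_identity[of "\<lambda>A B C. G (A * S b) (B * S C)" X] by simp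
    done
  also have "\<dots> = (\<Sum>(X, b)\<leftarrow>\<Delta> x. \<Sum>(u, v)\<leftarrow>\<Delta>' X. G (u * S b) 1 * \<epsilon> v)"
    apply (intro sum_list_pair_cong)
    subgoal for X b u v
      using D1.antipode_right[of "\<lambda>w. G (u * S b) w" v] by (simp add: mult.commute)
    done
  also have "\<dots> = (\<Sum>(X, b)\<leftarrow>\<Delta> x. G (X * S b) 1)"
    apply (intro sum_list_pair_cong)
    subgoal for X b
      using D2.counit_right[of "\<lambda>u. G (u * S b) 1" X] by (simp add: counit'_eq_counit)
    done
  also have "\<dots> = \<epsilon> x * G 1 1"
    using D1.antipode_right[of "\<lambda>w. G w 1" x] by simp
  finally show ?thesis .
qed

lemma comult'_antipode_conv_left_inverse:
  assumes G: "\<And>v. lin (\<lambda>u. G u v)" "\<And>u. lin (\<lambda>v. G u v)"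
  shows "(\<Sum>(x1, y1)\<leftarrow>\<Delta> z. \<Sum>(p, q)\<leftarrow>\<Delta>' (S x1). \<Sum>(r, s)\<leftarrow>\<Delta>' y1. G (p * r) (q * s)) = \<epsilon> z * G 1 1"
proof -
  have "(\<Sum>(x1, y1)\<leftarrow>\<Delta> z. \<Sum>(p, q)\<leftarrow>\<Delta>' (S x1). \<Sum>(r, s)\<leftarrow>\<Delta>' y1. G (p * r) (q * s)) =
      (\<Sum>(x1, y1)\<leftarrow>\<Delta> z. \<Sum>(u, v)\<leftarrow>\<Delta>' (S x1 * y1). G u v)"
    using D2.comult_mult[OF G] by (intro sum_list_pair_cong) simp
  also have "\<dots> = \<epsilon> z * (\<Sum>(u, v)\<leftarrow>\<Delta>' 1. G u v)"
    using D1.antipode_left[of "\<lambda>w. \<Sum>(u, v)\<leftarrow>\<Delta>' w. G u v" z] G by simp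
  also have "\<dots> = \<epsilon> z * G 1 1"
    using D2.comult_one[OF G] by simp
  finally show ?thesis .
qed

text \<open>The convolution inverse of \<Delta>' in Hom(H, H \<otimes> H) is unique, so the left inverse \<open>\<Delta>' \<circ> S\<close>
  and the right inverse \<open>S(h\<^sub>1) h\<^sub>2\<^sub>1\<^sub>' S(h\<^sub>3) \<otimes> S(h\<^sub>2\<^sub>2\<^sub>')\<close> coincide.\<close>

lemma comult'_antipode:
  assumes G: "\<And>v. lin (\<lambda>u. G u v)" "\<And>u. lin (\<lambda>v. G u v)"
  shows "(\<Sum>(p, q)\<leftarrow>\<Delta>' (S x). G p q) =
    (\<Sum>(a, b)\<leftarrow>\<Delta> x. \<Sum>(a1, a2)\<leftarrow>\<Delta> a. \<Sum>(m, n)\<leftarrow>\<Delta>' a2. G (S a1 * m * S b) (S n))"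
proof -
  have [simp]: "lin_endo g \<Longrightarrow> lin (\<lambda>u. G (g u) c)" "lin_endo g \<Longrightarrow> lin (\<lambda>u. G c (g u))" for g c
    using lin_fun_comp G by blast+
  have "(\<Sum>(p, q)\<leftarrow>\<Delta>' (S x). G p q) = (\<Sum>(x1, x2)\<leftarrow>\<Delta> x. (\<Sum>(p, q)\<leftarrow>\<Delta>' (S x1). G p q) * \<epsilon> x2)"
    using D1.counit_right[of "\<lambda>z. \<Sum>(p, q)\<leftarrow>\<Delta>' (S z). G p q" x] G by simp
  also have "\<dots> = (\<Sum>(x1, x2)\<leftarrow>\<Delta> x. \<Sum>(p, q)\<leftarrow>\<Delta>' (S x1). \<Sum>(y1, y2)\<leftarrow>\<Delta> x2. \<Sum>(p', q')\<leftarrow>\<Delta>' y1.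
      \<Sum>(a, b)\<leftarrow>\<Delta> y2. \<Sum>(a1, a2)\<leftarrow>\<Delta> a. \<Sum>(m, n)\<leftarrow>\<Delta>' a2. G (p * (p' * S a1 * m * S b)) (q * (q' * S n)))"
    apply (intro sum_list_pair_cong)
    subgoal for x1 x2
      unfolding sum_list_mult_const[symmetric] split_def
      apply (intro arg_cong[where f = sum_list] map_cong refl)
      subgoal for pq
        using comult'_conv_right_inverse[of "\<lambda>u v. G (fst pq * u) (snd pq * v)" x2]
        by (simp add: mult.commute split_def)
      done
    done
  also have "\<dots> = (\<Sum>(x1, x2)\<leftarrow>\<Delta> x. \<Sum>(y1, y2)\<leftarrow>\<Delta> x2. \<Sum>(p, q)\<leftarrow>\<Delta>' (S x1). \<Sum>(p', q')\<leftarrow>\<Delta>' y1.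
      \<Sum>(a, b)\<leftarrow>\<Delta> y2. \<Sum>(a1, a2)\<leftarrow>\<Delta> a. \<Sum>(m, n)\<leftarrow>\<Delta>' a2. G (p * (p' * S a1 * m * S b)) (q * (q' * S n)))"
    by (rule sum_list_pair_cong, rule sum_list_pair_swap)
  also have "\<dots> = (\<Sum>(z, y2)\<leftarrow>\<Delta> x. \<Sum>(x1, y1)\<leftarrow>\<Delta> z. \<Sum>(p, q)\<leftarrow>\<Delta>' (S x1). \<Sum>(p', q')\<leftarrow>\<Delta>' y1.
      \<Sum>(a, b)\<leftarrow>\<Delta> y2. \<Sum>(a1, a2)\<leftarrow>\<Delta> a. \<Sum>(m, n)\<leftarrow>\<Delta>' a2. G (p * (p' * S a1 * m * S b)) (q * (q' * S n)))"
    by (rule D1.coassoc[symmetric]) simp_all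
  also have "\<dots> = (\<Sum>(z, y2)\<leftarrow>\<Delta> x. \<epsilon> z *
      (\<Sum>(a, b)\<leftarrow>\<Delta> y2. \<Sum>(a1, a2)\<leftarrow>\<Delta> a. \<Sum>(m, n)\<leftarrow>\<Delta>' a2. G (S a1 * m * S b) (S n)))"
    apply (intro sum_list_pair_cong)
    subgoal for z y2
      using comult'_antipode_conv_left_inverse[of "\<lambda>A B. \<Sum>(a, b)\<leftarrow>\<Delta> y2. \<Sum>(a1, a2)\<leftarrow>\<Delta> a. \<Sum>(m, n)\<leftarrow>\<Delta>' a2.
          G (A * (S a1 * m * S b)) (B * S n)" z]
      by (simp add: mult.assoc)
    done
  also have "\<dots> = (\<Sum>(a, b)\<leftarrow>\<Delta> x. \<Sum>(a1, a2)\<leftarrow>\<Delta> a. \<Sum>(m, n)\<leftarrow>\<Delta>' a2. G (S a1 * m * S b) (S n))"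
    using D1.counit_left[of "\<lambda>y2. \<Sum>(a, b)\<leftarrow>\<Delta> y2. \<Sum>(a1, a2)\<leftarrow>\<Delta> a. \<Sum>(m, n)\<leftarrow>\<Delta>' a2. G (S a1 * m * S b) (S n)" x]
    by simp
  finally show ?thesis .
qed

lemma comult'_antipode_mult:
  assumes F: "\<And>b c. lin (\<lambda>a. F a b c)" "\<And>a c. lin (\<lambda>b. F a b c)" "\<And>a b. lin (\<lambda>c. F a b c)"
  shows "(\<Sum>(u, v)\<leftarrow>\<Delta>' y. \<Sum>(a1, a2)\<leftarrow>\<Delta>' (S x * u). F a1 a2 v) =
    (\<Sum>(a, b)\<leftarrow>\<Delta> x. \<Sum>(a1, a2)\<leftarrow>\<Delta> a. \<Sum>(m, n)\<leftarrow>\<Delta>' a2.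
      \<Sum>(u, v)\<leftarrow>\<Delta>' y. \<Sum>(r, s)\<leftarrow>\<Delta>' u. F (S a1 * m * S b * r) (S n * s) v)"
proof -
  have [simp]: "lin_endo g \<Longrightarrow> lin (\<lambda>x. F (g x) b c)" "lin_endo g \<Longrightarrow> lin (\<lambda>x. F a (g x) c)" for g a b c
    using lin_fun_comp F by blast+
  have "(\<Sum>(u, v)\<leftarrow>\<Delta>' y. \<Sum>(a1, a2)\<leftarrow>\<Delta>' (S x * u). F a1 a2 v) =
      (\<Sum>(u, v)\<leftarrow>\<Delta>' y. \<Sum>(p, q)\<leftarrow>\<Delta>' (S x). \<Sum>(r, s)\<leftarrow>\<Delta>' u. F (p * r) (q * s) v)"
    using D2.comult_mult F by (intro sum_list_pair_cong) simp
  also have "\<dots> = (\<Sum>(p, q)\<leftarrow>\<Delta>' (S x). \<Sum>(u, v)\<leftarrow>\<Delta>' y. \<Sum>(r, s)\<leftarrow>\<Delta>' u. F (p * r) (q * s) v)"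
    by (rule sum_list_pair_swap)
  also have "\<dots> = (\<Sum>(a, b)\<leftarrow>\<Delta> x. \<Sum>(a1, a2)\<leftarrow>\<Delta> a. \<Sum>(m, n)\<leftarrow>\<Delta>' a2.
      \<Sum>(u, v)\<leftarrow>\<Delta>' y. \<Sum>(r, s)\<leftarrow>\<Delta>' u. F (S a1 * m * S b * r) (S n * s) v)"
    using comult'_antipode[of "\<lambda>p q. \<Sum>(u, v)\<leftarrow>\<Delta>' y. \<Sum>(r, s)\<leftarrow>\<Delta>' u. F (p * r) (q * s) v" x] F
    by simp
  finally show ?thesis .
qed

abbreviation \<rho> :: "'h \<Rightarrow> ('h \<times> 'h) list" where
  "\<rho> \<equiv> brace_coaction \<Delta> S \<Delta>'"

lemma coaction_sum: "(\<Sum>(a, b)\<leftarrow>\<rho> h. F a b) = (\<Sum>(x, y)\<leftarrow>\<Delta> h. \<Sum>(u, v)\<leftarrow>\<Delta>' y. F (S x * u) v)"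
  by (simp add: brace_coaction_def o_def prod.case_distrib)

lemma coaction_add: "teq2 sc (\<rho> (a + b)) (\<rho> a @ \<rho> b)"
  unfolding teq2_def
proof (intro allI impI)
  fix \<phi> \<psi> assume "lin \<phi>" "lin \<psi>"
  then have [simp]: "lin_endo g \<Longrightarrow> lin (\<lambda>x. \<phi> (g x))" "lin_endo g \<Longrightarrow> lin (\<lambda>x. \<psi> (g x))" for g
    using lin_fun_comp by blast+
  show "(\<Sum>(x, y)\<leftarrow>\<rho> (a + b). \<phi> x * \<psi> y) = (\<Sum>(x, y)\<leftarrow>\<rho> a @ \<rho> b. \<phi> x * \<psi> y)"
    using D1.comult_add[of "\<lambda>x y. \<Sum>(u, v)\<leftarrow>\<Delta>' y. \<phi> (S x * u) * \<psi> v" a b] \<open>lin \<psi>\<close>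
    by (simp add: coaction_sum)
qed

lemma coaction_scale: "teq2 sc (\<rho> (sc c a)) (map (\<lambda>(x, y). (sc c x, y)) (\<rho> a))"
  unfolding teq2_def
proof (intro allI impI)
  fix \<phi> \<psi> assume "lin \<phi>" "lin \<psi>"
  then have [simp]: "lin_endo g \<Longrightarrow> lin (\<lambda>x. \<phi> (g x))" "lin_endo g \<Longrightarrow> lin (\<lambda>x. \<psi> (g x))" for g
    using lin_fun_comp by blast+
  have "(\<Sum>(x, y)\<leftarrow>map (\<lambda>(x, y). (sc c x, y)) (\<rho> a). \<phi> x * \<psi> y) = c * (\<Sum>(x, y)\<leftarrow>\<rho> a. \<phi> x * \<psi> y)"
    by (simp add: o_def split_def lin_fun_scale[OF \<open>lin \<phi>\<close>] mult.assoc sum_list_const_mult)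
  then show "(\<Sum>(x, y)\<leftarrow>\<rho> (sc c a). \<phi> x * \<psi> y) = (\<Sum>(x, y)\<leftarrow>map (\<lambda>(x, y). (sc c x, y)) (\<rho> a). \<phi> x * \<psi> y)"
    using D1.comult_scale[of "\<lambda>x y. \<Sum>(u, v)\<leftarrow>\<Delta>' y. \<phi> (S x * u) * \<psi> v" c a] \<open>lin \<psi>\<close>
    by (simp add: coaction_sum)
qed

lemma coaction_counit: "(\<Sum>(a, b)\<leftarrow>\<rho> h. sc (\<epsilon>' a) b) = h"
proof (rule lin_funs_separate)
  fix \<phi> assume \<phi>: "lin \<phi>"
  have "\<phi> (\<Sum>(a, b)\<leftarrow>\<rho> h. sc (\<epsilon>' a) b) = (\<Sum>(a, b)\<leftarrow>\<rho> h. \<epsilon>' a * \<phi> b)"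
    by (simp add: lin_fun_sum_list[OF \<phi>] split_def lin_fun_scale[OF \<phi>])
  also have "\<dots> = (\<Sum>(x, y)\<leftarrow>\<Delta> h. \<Sum>(u, v)\<leftarrow>\<Delta>' y. \<epsilon>' (S x * u) * \<phi> v)"
    by (rule coaction_sum)
  also have "\<dots> = (\<Sum>(x, y)\<leftarrow>\<Delta> h. \<epsilon> x * \<phi> y)"
    apply (intro sum_list_pair_cong)
    subgoal for x y
      using D2.counit_left[of "\<lambda>v. \<epsilon>' (S x) * \<phi> v" y] \<phi>
      by (simp add: D2.counit_mult mult_ac counit'_antipode)
    done
  also have "\<dots> = \<phi> h"
    using D1.counit_left[OF \<phi>] .
  finally show "\<phi> (\<Sum>(a, b)\<leftarrow>\<rho> h. sc (\<epsilon>' a) b) = \<phi> h" .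
qed

lemma coaction_counit_compat: "(\<Sum>(a, b)\<leftarrow>\<rho> h. sc (\<epsilon> b) a) = sc (\<epsilon> h) 1"
proof (rule lin_funs_separate)
  fix \<phi> assume \<phi>: "lin \<phi>"
  then have [simp]: "lin_endo g \<Longrightarrow> lin (\<lambda>x. \<phi> (g x))" for g
    using lin_fun_comp by blast
  have "\<phi> (\<Sum>(a, b)\<leftarrow>\<rho> h. sc (\<epsilon> b) a) = (\<Sum>(a, b)\<leftarrow>\<rho> h. \<phi> a * \<epsilon> b)"
    by (simp add: lin_fun_sum_list[OF \<phi>] split_def lin_fun_scale[OF \<phi>] mult.commute)
  also have "\<dots> = (\<Sum>(x, y)\<leftarrow>\<Delta> h. \<Sum>(u, v)\<leftarrow>\<Delta>' y. \<phi> (S x * u) * \<epsilon> v)"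
    by (rule coaction_sum)
  also have "\<dots> = (\<Sum>(x, y)\<leftarrow>\<Delta> h. \<phi> (S x * y))"
    apply (intro sum_list_pair_cong)
    subgoal for x y
      using D2.counit_right[of "\<lambda>u. \<phi> (S x * u)" y] by (simp add: counit'_eq_counit)
    done
  also have "\<dots> = \<epsilon> h * \<phi> 1"
    using D1.antipode_left[OF \<phi>] .
  finally show "\<phi> (\<Sum>(a, b)\<leftarrow>\<rho> h. sc (\<epsilon> b) a) = \<phi> (sc (\<epsilon> h) 1)"
    by (simp add: lin_fun_scale[OF \<phi>])
qed

lemma coaction_coassoc:
  "teq3 sc [(a1, a2, b). (a, b) \<leftarrow> \<rho> h, (a1, a2) \<leftarrow> \<Delta>' a] [(a, c, d). (a, b) \<leftarrow> \<rho> h, (c, d) \<leftarrow> \<rho> b]"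
proof -
  have "(\<Sum>(x, y)\<leftarrow>\<Delta> h. \<Sum>(u, v)\<leftarrow>\<Delta>' y. \<Sum>(a1, a2)\<leftarrow>\<Delta>' (S x * u). \<phi> a1 * \<psi> a2 * \<chi> v) =
      (\<Sum>(x, y)\<leftarrow>\<Delta> h. \<Sum>(u, v)\<leftarrow>\<Delta>' y. \<Sum>(y1, y2)\<leftarrow>\<Delta> v. \<Sum>(u', v')\<leftarrow>\<Delta>' y2.
        \<phi> (S x * u) * \<psi> (S y1 * u') * \<chi> v')"
    if "lin \<phi>" "lin \<psi>" "lin \<chi>" for \<phi> \<psi> \<chi>
  proof -
    have [simp]: "lin_endo g \<Longrightarrow> lin (\<lambda>x. \<phi> (g x))" "lin_endo g \<Longrightarrow> lin (\<lambda>x. \<psi> (g x))"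
      "lin_endo g \<Longrightarrow> lin (\<lambda>x. \<chi> (g x))" for g
      using lin_fun_comp that by blast+
    note [simp] = that
    define K where "K c1 c2 c3 c4 = (\<Sum>(m, n)\<leftarrow>\<Delta>' c2. \<Sum>(r, t)\<leftarrow>\<Delta>' c4. \<Sum>(s, v)\<leftarrow>\<Delta>' t.
        \<phi> (S c1 * m * S c3 * r) * \<psi> (S n * s) * \<chi> v)" for c1 c2 c3 c4
    have [simp]: "lin (\<lambda>a. K a b c d)" "lin (\<lambda>b. K a b c d)" "lin (\<lambda>c. K a b c d)" "lin (\<lambda>d. K a b c d)"
      for a b c d
      unfolding K_def by simp_all
    have "(\<Sum>(x, y)\<leftarrow>\<Delta> h. \<Sum>(u, v)\<leftarrow>\<Delta>' y. \<Sum>(a1, a2)\<leftarrow>\<Delta>' (S x * u). \<phi> a1 * \<psi> a2 * \<chi> v) =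
        (\<Sum>(x, y)\<leftarrow>\<Delta> h. \<Sum>(a, b)\<leftarrow>\<Delta> x. \<Sum>(a1, a2)\<leftarrow>\<Delta> a. \<Sum>(m, n)\<leftarrow>\<Delta>' a2.
          \<Sum>(u, v)\<leftarrow>\<Delta>' y. \<Sum>(r, s)\<leftarrow>\<Delta>' u. \<phi> (S a1 * m * S b * r) * \<psi> (S n * s) * \<chi> v)"
      by (intro sum_list_pair_cong comult'_antipode_mult) simp_all
    also have "\<dots> = (\<Sum>(x, y)\<leftarrow>\<Delta> h. \<Sum>(a, b)\<leftarrow>\<Delta> x. \<Sum>(a1, a2)\<leftarrow>\<Delta> a. K a1 a2 b y)"
      apply (intro sum_list_pair_cong)
      subgoal for x y a b a1 a2
        unfolding K_def
        apply (rule sum_list_pair_cong)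
        subgoal for m n
          using D2.coassoc[of "\<lambda>r s v. \<phi> (S a1 * m * S b * r) * \<psi> (S n * s) * \<chi> v" y] by simp
        done
      done
    also have "\<dots> = (\<Sum>(x, y)\<leftarrow>\<Delta> h. \<Sum>(y1, y2)\<leftarrow>\<Delta> y. \<Sum>(z1, z2)\<leftarrow>\<Delta> y2. K x y1 z1 z2)"
      by (rule D1.coassoc4_left) simp_all
    also have "\<dots> = (\<Sum>(x, y)\<leftarrow>\<Delta> h. \<Sum>(z, w)\<leftarrow>\<Delta> y. \<Sum>(z1, z2)\<leftarrow>\<Delta> z. K x z1 z2 w)"
      by (rule D1.coassoc4_inner[symmetric]) simp_all
    also have "\<dots> = (\<Sum>(x, y)\<leftarrow>\<Delta> h. \<Sum>(u, v)\<leftarrow>\<Delta>' y. \<Sum>(y1, y2)\<leftarrow>\<Delta> v. \<Sum>(u', v')\<leftarrow>\<Delta>' y2.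
        \<phi> (S x * u) * \<psi> (S y1 * u') * \<chi> v')"
      apply (intro sum_list_pair_cong)
      subgoal for x y
        using brace_identity[of "\<lambda>A B C. \<Sum>(u', v')\<leftarrow>\<Delta>' C. \<phi> (S x * A) * \<psi> (S B * u') * \<chi> v'" y]
        unfolding K_def by (simp add: mult.assoc)
      done
    finally show ?thesis .
  qed
  then show ?thesis
    unfolding teq3_def by (simp add: brace_coaction_def o_def prod.case_distrib)
qed

lemma coaction_comult:
  "teq3 sc [(a, b1, b2). (a, b) \<leftarrow> \<rho> h, (b1, b2) \<leftarrow> \<Delta> b]
    [(a * c, b, d). (x, y) \<leftarrow> \<Delta> h, (a, b) \<leftarrow> \<rho> x, (c, d) \<leftarrow> \<rho> y]"
proof -
  have "(\<Sum>(x, y)\<leftarrow>\<Delta> h. \<Sum>(u, v)\<leftarrow>\<Delta>' y. \<Sum>(b1, b2)\<leftarrow>\<Delta> v. \<phi> (S x * u) * \<psi> b1 * \<chi> b2) =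
      (\<Sum>(x, y)\<leftarrow>\<Delta> h. \<Sum>(x1, x2)\<leftarrow>\<Delta> x. \<Sum>(u, v)\<leftarrow>\<Delta>' x2. \<Sum>(y1, y2)\<leftarrow>\<Delta> y. \<Sum>(u', v')\<leftarrow>\<Delta>' y2.
        \<phi> (S x1 * u * (S y1 * u')) * \<psi> v * \<chi> v')"
    if "lin \<phi>" "lin \<psi>" "lin \<chi>" for \<phi> \<psi> \<chi>
  proof -
    have [simp]: "lin_endo g \<Longrightarrow> lin (\<lambda>x. \<phi> (g x))" for g
      using lin_fun_comp that by blast
    note [simp] = that
    define K where "K c1 c2 c3 c4 = (\<Sum>(p, p')\<leftarrow>\<Delta>' c2. \<Sum>(r, r')\<leftarrow>\<Delta>' c4.
        \<phi> (S c1 * p * S c3 * r) * \<psi> p' * \<chi> r')" for c1 c2 c3 c4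
    have [simp]: "lin (\<lambda>a. K a b c d)" "lin (\<lambda>b. K a b c d)" "lin (\<lambda>c. K a b c d)" "lin (\<lambda>d. K a b c d)"
      for a b c d
      unfolding K_def by simp_all
    have "(\<Sum>(x, y)\<leftarrow>\<Delta> h. \<Sum>(u, v)\<leftarrow>\<Delta>' y. \<Sum>(b1, b2)\<leftarrow>\<Delta> v. \<phi> (S x * u) * \<psi> b1 * \<chi> b2) =
        (\<Sum>(x, y)\<leftarrow>\<Delta> h. \<Sum>(z, w)\<leftarrow>\<Delta> y. \<Sum>(z1, z2)\<leftarrow>\<Delta> z. K x z1 z2 w)"
      apply (intro sum_list_pair_cong)
      subgoal for x y
        using brace_identity[of "\<lambda>A B C. \<phi> (S x * A) * \<psi> B * \<chi> C" y]
        unfolding K_def by (simp add: mult.assoc)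
      done
    also have "\<dots> = (\<Sum>(x, y)\<leftarrow>\<Delta> h. \<Sum>(y1, y2)\<leftarrow>\<Delta> y. \<Sum>(z1, z2)\<leftarrow>\<Delta> y2. K x y1 z1 z2)"
      by (rule D1.coassoc4_inner) simp_all
    also have "\<dots> = (\<Sum>(x, y)\<leftarrow>\<Delta> h. \<Sum>(x1, x2)\<leftarrow>\<Delta> x. \<Sum>(y1, y2)\<leftarrow>\<Delta> y. K x1 x2 y1 y2)"
      by (rule D1.coassoc4_balanced[symmetric]) simp_all
    also have "\<dots> = (\<Sum>(x, y)\<leftarrow>\<Delta> h. \<Sum>(x1, x2)\<leftarrow>\<Delta> x. \<Sum>(u, v)\<leftarrow>\<Delta>' x2. \<Sum>(y1, y2)\<leftarrow>\<Delta> y.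
        \<Sum>(u', v')\<leftarrow>\<Delta>' y2. \<phi> (S x1 * u * (S y1 * u')) * \<psi> v * \<chi> v')"
      apply (intro sum_list_pair_cong)
      subgoal for x y x1 x2
        unfolding K_def by (rule trans[OF sum_list_pair_swap]) (simp add: mult.assoc)
      done
    finally show ?thesis .
  qed
  then show ?thesis
    unfolding teq3_def by (simp add: brace_coaction_def o_def prod.case_distrib)
qed

end

theorem lemma2p5:
  fixes sc :: "'k::field \<Rightarrow> 'h::ring_1 \<Rightarrow> 'h"
    and \<Delta> \<Delta>' :: "'h \<Rightarrow> ('h \<times> 'h) list"
    and \<epsilon> \<epsilon>' :: "'h \<Rightarrow> 'k"
    and S T :: "'h \<Rightarrow> 'h"
  assumes "hopf_brace sc \<Delta> \<epsilon> S \<Delta>' \<epsilon>' T"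
  defines "\<rho> \<equiv> brace_coaction \<Delta> S \<Delta>'"
  shows
    "(\<forall>a b. teq2 sc (\<rho> (a + b)) (\<rho> a @ \<rho> b)) \<and>
     (\<forall>c a. teq2 sc (\<rho> (sc c a)) (map (\<lambda>(x, y). (sc c x, y)) (\<rho> a))) \<and>
     (\<forall>h. teq3 sc [(a1, a2, b). (a, b) \<leftarrow> \<rho> h, (a1, a2) \<leftarrow> \<Delta>' a]
                  [(a, c, d). (a, b) \<leftarrow> \<rho> h, (c, d) \<leftarrow> \<rho> b]) \<and>
     (\<forall>h. (\<Sum>(a, b)\<leftarrow>\<rho> h. sc (\<epsilon>' a) b) = h) \<and>
     (\<forall>h. teq3 sc [(a, b1, b2). (a, b) \<leftarrow> \<rho> h, (b1, b2) \<leftarrow> \<Delta> b]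
                  [(a * c, b, d). (x, y) \<leftarrow> \<Delta> h, (a, b) \<leftarrow> \<rho> x, (c, d) \<leftarrow> \<rho> y]) \<and>
     (\<forall>h. (\<Sum>(a, b)\<leftarrow>\<rho> h. sc (\<epsilon> b) a) = sc (\<epsilon> h) 1)"
proof -
  interpret brace sc \<Delta> \<Delta>' \<epsilon> \<epsilon>' S T
    by (rule brace.intro) fact
  show ?thesis
    unfolding \<rho>_def
    using coaction_add coaction_scale coaction_coassoc coaction_counit coaction_comult coaction_counit_compat
    by blast
qed

end
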